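(* Let $\Gamma$ be a finite undirected simple graph with vertices $x_1,\dots,x_n$ and edge set $E$, let $G_\Gamma$ be the associated group, and let $y_1,\dots,y_N$ be the commutator generators of $G_\Gamma$ (notation as in the context). Let $i_0\in\{1,\dots,n\}$ and let $z_{i_0},t_1,\dots,t_N\in\mathbb{Z}$ with $z_{i_0}\neq 0$. Then \[h\Big(Z_{G_\Gamma}\Big(x_{i_0}^{z_{i_0}}\prod_{l=1}^N y_l^{t_l}\Big)\Big)=\deg(x_{i_0})+N+1,\] where $Z_{G_\Gamma}(g)$ denotes the centralizer of $g$ in $G_\Gamma$ and $h$ denotes the Hirsch number.
   Context: For a finite undirected simple graph $\Gamma$ with vertex set $\{x_1,\dots,x_n\}$ and edge set $E$, the group $G_\Gamma$ is defined by the presentation with generators $x_1,\dots,x_n$ and $y_{i,j}$ for each pair $i<j$ with $x_ix_j\notin E$, and relations $[x_j,x_i]=1$ if $x_ix_j\in E$; $[x_j,x_i]=y_{i,j}$ if $x_ix_j\notin E$ and $i<j$; and $[x_l,y_{i,j}]=1$ for all $l$ and all such $y_{i,j}$. (It is the 2-step nilpotent quotient of the right-angled Artin group of $\Gamma$.) Let $N$ be the number of pairs $i<j$ with $x_ix_j\notin E$, and enumerate the $y_{i,j}$ as $y_1,\dots,y_N$. Every element of $G_\Gamma$ is uniquely of the form $x_1^{z_1}\cdots x_n^{z_n}y_1^{t_1}\cdots y_N^{t_N}$ with $z_i,t_l\in\mathbb{Z}$. The Hirsch number $h(G)$ of a finitely generated nilpotent group $G$ is the number of infinite cyclic factors in any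 subnormal series of $G$ with cyclic factors. *)

theory Defs
  imports "HOL-Algebra.Algebra"
begin

text \<open>Vertices x_1..x_n are indexed by 0..n-1. The graph is given by an edge relation E
  (assumed symmetric and irreflexive in the theorem). An element
  x_1^z_1 ... x_n^z_n y_1^t_1 ... y_N^t_N is encoded by the pair (z, t), where
  z :: nat => int is supported on {0..<n} and t :: nat * nat => int is supported on the
  set of non-edges {(i,j). i < j < n, not E i j} (t (i,j) is the exponent of y_{i,j}).
  Multiplication: x_j^a x_i^b = x_i^b x_j^a y_{ij}^(a b) for i < j non-adjacent, with the
  y's central, hence
  (a,s)(b,u) = (a+b, s+u+c) with c(i,j) = a_j * b_i for non-edges i<j.\<close>

definition nonedges :: "nat \<Rightarrow> (nat \<Rightarrow> nat \<Rightarrow> bool) \<Rightarrow> (nat \<times> nat) set" where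
  "nonedges n E = {(i, j). i < j \<and> j < n \<and> \<not> E i j}"

definition GGamma_mult :: "nat \<Rightarrow> (nat \<Rightarrow> nat \<Rightarrow> bool)
    \<Rightarrow> (nat \<Rightarrow> int) \<times> (nat \<times> nat \<Rightarrow> int)
    \<Rightarrow> (nat \<Rightarrow> int) \<times> (nat \<times> nat \<Rightarrow> int)
    \<Rightarrow> (nat \<Rightarrow> int) \<times> (nat \<times> nat \<Rightarrow> int)" where
  "GGamma_mult n E g h =
     (\<lambda>i. fst g i + fst h i,
      \<lambda>p. snd g p + snd h p
            + (if p \<in> nonedges n E then fst g (snd p) * fst h (fst p) else 0))"

definition GGamma :: "nat \<Rightarrow> (nat \<Rightarrow> nat \<Rightarrow> bool)
    \<Rightarrow> ((nat \<Rightarrow> int) \<times> (nat \<times> nat \<Rightarrow> int)) monoid" where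
  "GGamma n E =
    \<lparr> carrier = {g. (\<forall>i. n \<le> i \<longrightarrow> fst g i = 0)
                     \<and> (\<forall>p. p \<notin> nonedges n E \<longrightarrow> snd g p = 0)},
      monoid.mult = GGamma_mult n E,
      monoid.one = ((\<lambda>_. 0), (\<lambda>_. 0)) \<rparr>"

definition vertex_degree :: "nat \<Rightarrow> (nat \<Rightarrow> nat \<Rightarrow> bool) \<Rightarrow> nat \<Rightarrow> nat" where
  "vertex_degree n E i = card {j. j < n \<and> E i j}"

definition centralizer :: "('a, 'b) monoid_scheme \<Rightarrow> 'a \<Rightarrow> 'a set" where
  "centralizer G g = {h \<in> carrier G. h \<otimes>\<^bsub>G\<^esub> g = g \<otimes>\<^bsub>G\<^esub> h}"

definition cyclic_subnormal_series ::
    "('a, 'b) monoid_scheme \<Rightarrow> 'a set \<Rightarrow> nat \<Rightarrow> (nat \<Rightarrow> 'a set) \<Rightarrow> bool" where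
  "cyclic_subnormal_series G H k S \<longleftrightarrow>
     S 0 = H \<and> S k = {\<one>\<^bsub>G\<^esub>} \<and>
     (\<forall>i\<le>k. subgroup (S i) G) \<and>
     (\<forall>i<k. S (Suc i) \<subseteq> S i \<and> S (Suc i) \<lhd> (G\<lparr>carrier := S i\<rparr>) \<and>
            cyclic_group ((G\<lparr>carrier := S i\<rparr>) Mod (S (Suc i))))"

definition num_infinite_factors ::
    "('a, 'b) monoid_scheme \<Rightarrow> nat \<Rightarrow> (nat \<Rightarrow> 'a set) \<Rightarrow> nat" where
  "num_infinite_factors G k S =
     card {i. i < k \<and> infinite (carrier ((G\<lparr>carrier := S i\<rparr>) Mod (S (Suc i))))}"

definition hirsch :: "('a, 'b) monoid_scheme \<Rightarrow> 'a set \<Rightarrow> nat" where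
  "hirsch G H = (THE m. \<exists>k S. cyclic_subnormal_series G H k S \<and> num_infinite_factors G k S = m)"

end

theory Submission
  imports Defs "HOL-Library.Function_Algebras" "HOL-Library.Product_Lexorder"
begin

text \<open>
  Two integer-valued coordinate maps on \<open>G\<^sub>\<Gamma>\<close> control all cyclic subnormal series: the
  abelianisation \<open>\<psi> = fst\<close> to \<open>\<int>\<^sup>n\<close>, and on its kernel, the central subgroup of the
  \<open>y\<^sub>l\<close>, the map \<open>\<sigma> = snd\<close> to \<open>\<int>\<^sup>N\<close>. For a subgroup \<open>K\<close> the invariant
  \<open>rk \<psi>(K) + rk \<sigma>(K \<inter> ker \<psi>)\<close> (ranks of the rational spans) drops by one along a step
  \<open>K' \<lhd> K\<close> with cyclic \<open>K/K'\<close> if \<open>K/K'\<close> is infinite and is unchanged otherwise, so every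
  cyclic series of \<open>K\<close> has exactly that many infinite factors and the Hirsch number is well
  defined. The centraliser in question consists of the elements whose \<open>x\<close>-exponents vanish
  outside the closed neighbourhood \<open>V\<close> of the vertex; killing one coordinate at a time gives a
  cyclic series through it with \<open>|V| + N\<close> infinite factors.
\<close>

section \<open>Ranks of sets of integer vectors\<close>

interpretation rat_fun: vector_space "\<lambda>(c::rat) (f::'x \<Rightarrow> rat) x. c * f x"
  by unfold_locales (auto simp: fun_eq_iff algebra_simps)

definition to_rat :: "('x \<Rightarrow> int) \<Rightarrow> 'x \<Rightarrow> rat" where
  "to_rat f = (\<lambda>x. of_int (f x))"

definition int_rank :: "('x \<Rightarrow> int) set \<Rightarrow> nat" where
  "int_rank A = rat_fun.dim (to_rat ` A)"

definition int_scale :: "int \<Rightarrow> ('x \<Rightarrow> int) \<Rightarrow> 'x \<Rightarrow> int" where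
  "int_scale k f = (\<lambda>x. k * f x)"

definition add_subgroup :: "('x \<Rightarrow> int) set \<Rightarrow> bool" where
  "add_subgroup A \<longleftrightarrow> 0 \<in> A \<and> (\<forall>a\<in>A. \<forall>b\<in>A. a + b \<in> A) \<and> (\<forall>a\<in>A. - a \<in> A)"

lemma to_rat_inj: "to_rat a = to_rat b \<Longrightarrow> a = b"
  by (auto simp: to_rat_def fun_eq_iff)

lemma add_subgroup_int_scale:
  assumes A: "add_subgroup A" and a: "a \<in> A"
  shows "int_scale k a \<in> A"
proof -
  have nat: "int_scale (int m) a \<in> A" for m
  proof (induction m)
    case 0
    then show ?case using A by (simp add: add_subgroup_def int_scale_def zero_fun_def)
  next
    case (Suc m)
    have "int_scale (int m) a + a \<in> A" using Suc A a unfolding add_subgroup_def by blast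
    moreover have "int_scale (int (Suc m)) a = int_scale (int m) a + a"
      by (simp add: int_scale_def fun_eq_iff algebra_simps)
    ultimately show ?case by metis
  qed
  show ?thesis
  proof (cases k rule: int_cases2)
    case (nonneg m)
    then show ?thesis using nat by simp
  next
    case (nonpos m)
    then have "int_scale k a = - int_scale (int m) a" by (simp add: int_scale_def fun_eq_iff)
    then show ?thesis using nat[of m] A unfolding add_subgroup_def by metis
  qed
qed

lemma add_subgroup_pos_multiple:
  assumes "add_subgroup A" "k \<noteq> 0" "int_scale k a \<in> A"
  shows "\<exists>m>0. int_scale m a \<in> A"
proof (cases "k > 0")
  case False
  have "int_scale (- k) a = - int_scale k a" by (simp add: int_scale_def fun_eq_iff)
  then have "int_scale (- k) a \<in> A" using assms by (simp add: add_subgroup_def)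
  then show ?thesis using False \<open>k \<noteq> 0\<close> by (intro exI[of _ "- k"]) simp
qed (use assms in blast)

lemma span_to_rat_denominator:
  assumes A: "add_subgroup A" and v: "v \<in> rat_fun.span (to_rat ` A)"
  shows "\<exists>m>0. \<exists>w\<in>A. to_rat w = (\<lambda>x. of_int m * v x)"
  using v
proof (induction rule: rat_fun.span_induct_alt)
  case base
  have "to_rat 0 = (\<lambda>x. of_int 1 * (0 :: 'a \<Rightarrow> rat) x)" by (simp add: to_rat_def fun_eq_iff)
  then show ?case using A unfolding add_subgroup_def by (intro exI[of _ 1]) auto
next
  case (step c x y)
  obtain a where a: "a \<in> A" "x = to_rat a" using step.hyps by auto
  obtain m w where mw: "m > 0" "w \<in> A" "to_rat w = (\<lambda>x. of_int m * y x)" using step.IH by auto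
  obtain p q where pq: "quotient_of c = (p, q)" by (cases "quotient_of c")
  have q: "q > 0" and c: "c = of_int p / of_int q"
    using quotient_of_denom_pos[OF pq] quotient_of_div[OF pq] by auto
  have "int_scale (m * p) a + int_scale q w \<in> A"
    using A a mw by (simp add: add_subgroup_def add_subgroup_int_scale)
  moreover have "to_rat (int_scale (m * p) a + int_scale q w) = (\<lambda>i. of_int (q * m) * (c * x i + y i))"
    using q mw(3) a(2) by (auto simp: c to_rat_def int_scale_def fun_eq_iff field_simps)
  ultimately show ?case using q mw(1) by (intro exI[of _ "q * m"]) (auto simp: plus_fun_def)
qed

lemma finite_support_in_span:
  fixes f :: "'x \<Rightarrow> rat"
  assumes "finite D" "\<And>x. x \<notin> D \<Longrightarrow> f x = 0"
  shows "f \<in> rat_fun.span ((\<lambda>d x. if x = d then 1 else 0) ` D)"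
  using assms
proof (induction D arbitrary: f rule: finite_induct)
  case empty
  then have "f = 0" by (simp add: fun_eq_iff)
  then show ?case using rat_fun.span_zero by metis
next
  case (insert d D)
  let ?\<delta> = "\<lambda>d x. if x = d then 1 else (0::rat)"
  have "f - (\<lambda>x. f d * ?\<delta> d x) \<in> rat_fun.span (?\<delta> ` D)"
    using insert.prems by (intro insert.IH) auto
  then have "f - (\<lambda>x. f d * ?\<delta> d x) + (\<lambda>x. f d * ?\<delta> d x) \<in> rat_fun.span (?\<delta> ` insert d D)"
    by (intro rat_fun.span_add rat_fun.span_scale)
      (auto intro: rat_fun.span_base rev_subsetD[OF _ rat_fun.span_mono])
  then show ?case by simp
qed

lemma finite_independent_finite_support:
  assumes D: "finite D" and supp: "\<And>f x. f \<in> A \<Longrightarrow> x \<notin> D \<Longrightarrow> f x = 0"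
    and B: "B \<subseteq> rat_fun.span (to_rat ` A)" "rat_fun.independent B"
  shows "finite B"
proof -
  let ?\<Delta> = "(\<lambda>d x. if x = d then 1 else (0::rat)) ` D"
  have "to_rat ` A \<subseteq> rat_fun.span ?\<Delta>"
    using finite_support_in_span[OF D] supp by (auto simp: to_rat_def)
  then have "rat_fun.span (to_rat ` A) \<subseteq> rat_fun.span ?\<Delta>"
    by (simp add: rat_fun.span_minimal rat_fun.subspace_span)
  then show ?thesis using rat_fun.independent_span_bound[of ?\<Delta> B] B D by auto
qed

lemma int_rank_eq_if_multiples:
  assumes sub: "A' \<subseteq> A" and mult: "\<And>b. b \<in> A \<Longrightarrow> \<exists>m>0. int_scale m b \<in> A'"
  shows "int_rank A = int_rank A'"
proof -
  have "to_rat b \<in> rat_fun.span (to_rat ` A')" if b: "b \<in> A" for b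
  proof -
    obtain m where m: "m > 0" "int_scale m b \<in> A'" using mult[OF b] by blast
    have "(\<lambda>x. (1 / of_int m) * to_rat (int_scale m b) x) \<in> rat_fun.span (to_rat ` A')"
      using m by (intro rat_fun.span_scale rat_fun.span_base) auto
    moreover have "(\<lambda>x. (1 / of_int m) * to_rat (int_scale m b) x) = to_rat b"
      using m by (auto simp: to_rat_def int_scale_def fun_eq_iff)
    ultimately show ?thesis by simp
  qed
  then have "to_rat ` A \<subseteq> rat_fun.span (to_rat ` A')" by blast
  then have "rat_fun.span (to_rat ` A) \<subseteq> rat_fun.span (to_rat ` A')"
    by (rule rat_fun.span_minimal[OF _ rat_fun.subspace_span])
  moreover have "rat_fun.span (to_rat ` A') \<subseteq> rat_fun.span (to_rat ` A)"
    using sub by (intro rat_fun.span_mono) auto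
  ultimately show ?thesis unfolding int_rank_def by (intro rat_fun.span_eq_dim) auto
qed

lemma int_rank_Suc:
  assumes sub: "A' \<subseteq> A" and A': "add_subgroup A'" and a: "a \<in> A"
    and D: "finite D" and supp: "\<And>f x. f \<in> A \<Longrightarrow> x \<notin> D \<Longrightarrow> f x = 0"
    and no_multiple: "\<And>m. m > 0 \<Longrightarrow> int_scale m a \<notin> A'"
    and cover: "\<And>b. b \<in> A \<Longrightarrow> \<exists>m>0. \<exists>j. int_scale m b - int_scale j a \<in> A'"
  shows "int_rank A = Suc (int_rank A')"
proof -
  obtain B where B: "B \<subseteq> to_rat ` A'" "rat_fun.independent B" "to_rat ` A' \<subseteq> rat_fun.span B"
    "card B = rat_fun.dim (to_rat ` A')"
    using rat_fun.basis_exists by blast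
  have "B \<subseteq> rat_fun.span (to_rat ` A)" using B(1) sub rat_fun.span_superset by blast
  then have finB: "finite B" using finite_independent_finite_support[of D A B] D supp B(2) by blast
  have "to_rat a \<notin> rat_fun.span (to_rat ` A')"
  proof
    assume "to_rat a \<in> rat_fun.span (to_rat ` A')"
    then obtain m w where "m > 0" "w \<in> A'" "to_rat w = (\<lambda>x. of_int m * to_rat a x)"
      using span_to_rat_denominator[OF A'] by blast
    moreover have "(\<lambda>x. of_int m * to_rat a x) = to_rat (int_scale m a)"
      by (simp add: to_rat_def int_scale_def)
    ultimately show False using no_multiple to_rat_inj by metis
  qed
  then have a_new: "to_rat a \<notin> rat_fun.span B"
    using B(1) rat_fun.span_mono by blast
  have "rat_fun.span (insert (to_rat a) B) = rat_fun.span (to_rat ` A)"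
  proof
    show "rat_fun.span (insert (to_rat a) B) \<subseteq> rat_fun.span (to_rat ` A)"
      using B(1) sub a by (intro rat_fun.span_mono) auto
  next
    have "to_rat b \<in> rat_fun.span (insert (to_rat a) B)" if b: "b \<in> A" for b
    proof -
      obtain m j where mj: "m > 0" "int_scale m b - int_scale j a \<in> A'" using cover[OF b] by blast
      let ?w = "int_scale m b - int_scale j a"
      have "to_rat ?w \<in> rat_fun.span (insert (to_rat a) B)"
        using mj(2) B(3) rat_fun.span_mono[of B "insert (to_rat a) B"] by blast
      then have "(\<lambda>x. (1 / of_int m) * (to_rat ?w x + of_int j * to_rat a x))
          \<in> rat_fun.span (insert (to_rat a) B)"
        by (intro rat_fun.span_scale rat_fun.span_add[unfolded plus_fun_def]) (auto intro: rat_fun.span_base)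
      moreover have "(\<lambda>x. (1 / of_int m) * (to_rat ?w x + of_int j * to_rat a x)) = to_rat b"
        using mj(1) by (auto simp: to_rat_def int_scale_def fun_eq_iff field_simps)
      ultimately show ?thesis by simp
    qed
    then have "to_rat ` A \<subseteq> rat_fun.span (insert (to_rat a) B)" by blast
    then show "rat_fun.span (to_rat ` A) \<subseteq> rat_fun.span (insert (to_rat a) B)"
      by (rule rat_fun.span_minimal[OF _ rat_fun.subspace_span])
  qed
  then have "rat_fun.dim (to_rat ` A) = card (insert (to_rat a) B)"
    by (rule rat_fun.dim_eq_card[OF _ rat_fun.independent_insertI[OF a_new B(2)]])
  also have "\<dots> = Suc (card B)"
    using finB a_new rat_fun.span_superset[of B] by (subst card_insert_disjoint) auto
  finally show ?thesis using B(4) unfolding int_rank_def by simp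
qed

lemma int_rank_cover:
  assumes sub: "A' \<subseteq> A" and A': "add_subgroup A'" and a: "a \<in> A"
    and D: "finite D" and supp: "\<And>f x. f \<in> A \<Longrightarrow> x \<notin> D \<Longrightarrow> f x = 0"
    and cover: "\<And>b. b \<in> A \<Longrightarrow> \<exists>m>0. \<exists>j. int_scale m b - int_scale j a \<in> A'"
  shows "int_rank A = int_rank A' + (if \<exists>m>0. int_scale m a \<in> A' then 0 else 1)"
proof (cases "\<exists>m>0. int_scale m a \<in> A'")
  case True
  then obtain k where k: "k > 0" "int_scale k a \<in> A'" by blast
  have "\<exists>m>0. int_scale m b \<in> A'" if b: "b \<in> A" for b
  proof -
    obtain m j where mj: "m > 0" "int_scale m b - int_scale j a \<in> A'" using cover[OF b] by blast
    have "int_scale k (int_scale m b - int_scale j a) + int_scale j (int_scale k a) \<in> A'"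
      using A' mj k add_subgroup_int_scale unfolding add_subgroup_def by blast
    moreover have "int_scale k (int_scale m b - int_scale j a) + int_scale j (int_scale k a)
        = int_scale (k * m) b"
      by (simp add: int_scale_def fun_eq_iff algebra_simps)
    moreover have "k * m > 0" using k mj by simp
    ultimately show ?thesis by metis
  qed
  then show ?thesis using True int_rank_eq_if_multiples[OF sub] by simp
next
  case False
  have "int_rank A = Suc (int_rank A')"
    by (rule int_rank_Suc[of A' A a D]) (use assms False in auto)
  then show ?thesis using False by simp
qed

lemma int_rank_zero: "int_rank {0} = 0"
proof -
  have to_rat_0: "to_rat 0 = 0" unfolding to_rat_def by (rule ext) simp
  have zero: "to_rat ` {0} = {0}" by (simp only: image_insert image_empty to_rat_0)
  have span_0: "rat_fun.span {} = rat_fun.span {0 :: 'x \<Rightarrow> rat}"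
    by (rule rat_fun.span_insert_0[of "{}", symmetric])
  have "rat_fun.dim {0 :: 'x \<Rightarrow> rat} = 0"
    using rat_fun.dim_eq_card[OF span_0 rat_fun.independent_empty] by simp
  then show ?thesis unfolding int_rank_def zero by simp
qed

lemma (in group) subgroup_nat_pow_closed: "subgroup H G \<Longrightarrow> h \<in> H \<Longrightarrow> h [^] (k::nat) \<in> H"
  using subgroup_int_pow_closed[of H h "int k"] by (simp add: int_pow_int)

context
  fixes G (structure) and L :: "'a set" and \<phi> :: "'a \<Rightarrow> 'x \<Rightarrow> int"
  assumes group: "group G" and subgroup: "subgroup L G"
    and additive: "\<And>x y. x \<in> L \<Longrightarrow> y \<in> L \<Longrightarrow> \<phi> (x \<otimes> y) = \<phi> x + \<phi> y"
begin

interpretation group G by (rule group)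
interpretation L: subgroup L G by (rule subgroup)

lemma additive_one: "\<phi> \<one> = 0"
  using additive[of \<one> \<one>] by simp

lemma additive_inv:
  assumes "x \<in> L" shows "\<phi> (inv x) = - \<phi> x"
proof -
  have "\<phi> x + \<phi> (inv x) = 0" using additive[of x "inv x"] additive_one assms by simp
  then show ?thesis by (metis add.inverse_unique)
qed

lemma additive_nat_pow: "x \<in> L \<Longrightarrow> \<phi> (x [^] (k::nat)) = int_scale (int k) (\<phi> x)"
proof (induction k)
  case 0
  then show ?case using additive_one by (simp add: int_scale_def zero_fun_def)
next
  case (Suc k)
  then have "\<phi> (x [^] Suc k) = int_scale (int k) (\<phi> x) + \<phi> x"
    using additive subgroup_nat_pow_closed[OF subgroup] by simp
  then show ?case by (simp add: int_scale_def plus_fun_def algebra_simps)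
qed

lemma additive_int_pow:
  assumes x: "x \<in> L" shows "\<phi> (x [^] (k::int)) = int_scale k (\<phi> x)"
proof (cases k rule: int_cases2)
  case (nonneg m)
  then show ?thesis using x additive_nat_pow by (simp add: int_pow_int)
next
  case (nonpos m)
  then have "\<phi> (x [^] k) = - int_scale (int m) (\<phi> x)"
    using x by (simp add: int_pow_neg_int additive_inv additive_nat_pow subgroup_nat_pow_closed[OF subgroup])
  then show ?thesis using nonpos by (simp add: int_scale_def fun_eq_iff)
qed

lemma additive_image_add_subgroup:
  assumes "subgroup L' G" "L' \<subseteq> L"
  shows "add_subgroup (\<phi> ` L')"
proof -
  interpret L': subgroup L' G by (rule assms(1))
  have "\<phi> x + \<phi> y \<in> \<phi> ` L'" if "x \<in> L'" "y \<in> L'" for x y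
    using that assms(2) additive[of x y] by (metis L'.m_closed subsetD image_eqI)
  moreover have "- \<phi> x \<in> \<phi> ` L'" if "x \<in> L'" for x
    using that assms(2) additive_inv[of x] by (metis L'.m_inv_closed subsetD image_eqI)
  moreover have "0 \<in> \<phi> ` L'" using additive_one L'.one_closed by (metis image_eqI)
  ultimately show ?thesis unfolding add_subgroup_def by blast
qed

lemma int_rank_additive_image:
  assumes L': "subgroup L' G" "L' \<subseteq> L"
    and D: "finite D" and supp: "\<And>x i. x \<in> L \<Longrightarrow> i \<notin> D \<Longrightarrow> \<phi> x i = 0"
    and a: "a \<in> L"
    and cover: "\<And>x. x \<in> L \<Longrightarrow> \<exists>m>0. \<exists>j. x [^] (m::int) \<otimes> inv (a [^] (j::int)) \<in> L'"
  shows "int_rank (\<phi> ` L) =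
    int_rank (\<phi> ` L') + (if \<exists>m>0. int_scale m (\<phi> a) \<in> \<phi> ` L' then 0 else 1)"
proof (rule int_rank_cover[OF _ additive_image_add_subgroup[OF L'] imageI[OF a] D])
  show "\<phi> ` L' \<subseteq> \<phi> ` L" using L'(2) by blast
  show "f x = 0" if "f \<in> \<phi> ` L" "x \<notin> D" for f x using that supp by blast
  show "\<exists>m>0. \<exists>j. int_scale m b - int_scale j (\<phi> a) \<in> \<phi> ` L'" if "b \<in> \<phi> ` L" for b
  proof -
    obtain x where x: "x \<in> L" "b = \<phi> x" using \<open>b \<in> \<phi> ` L\<close> by blast
    obtain m j :: int where mj: "m > 0" "x [^] m \<otimes> inv (a [^] j) \<in> L'"
      using cover[OF x(1)] by blast
    have "\<phi> (x [^] m \<otimes> inv (a [^] j)) = int_scale m b - int_scale j (\<phi> a)"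
      using x a by (simp add: additive additive_inv additive_int_pow subgroup_int_pow_closed[OF subgroup])
    then show ?thesis using mj by (metis image_eqI)
  qed
qed

end

lemma (in normal) rcos_eq_self_iff: "x \<in> carrier G \<Longrightarrow> H #> x = H \<longleftrightarrow> x \<in> H"
  using rcos_self[OF _ subgroup_axioms] rcos_const[OF is_group] by blast

lemma (in normal) rcos_eq_iff:
  assumes "x \<in> carrier G" "y \<in> carrier G"
  shows "H #> x = H #> y \<longleftrightarrow> x \<otimes> inv y \<in> H"
  using rcos_self[OF assms(1) subgroup_axioms] rcos_module[OF is_group assms(2,1)]
    repr_independence[OF _ assms(2) subgroup_axioms] by metis

lemma (in normal) rcos_int_pow_eq:
  assumes "x \<in> carrier G" "y \<in> carrier G" "H #> x = H #> y"
  shows "H #> x [^] (k::int) = H #> y [^] k"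
proof -
  have "H #> x [^] k = (H #> x) [^]\<^bsub>G Mod H\<^esub> k" by (rule FactGroup_int_pow[OF assms(1), symmetric])
  also have "\<dots> = H #> y [^] k" unfolding assms(3) by (rule FactGroup_int_pow[OF assms(2)])
  finally show ?thesis .
qed

lemma (in normal) cyclic_FactGroup_generator:
  assumes "cyclic_group (G Mod H)"
  obtains g where "g \<in> carrier G" "\<And>x. x \<in> carrier G \<Longrightarrow> \<exists>k::int. H #> x = H #> g [^] k"
    "infinite (carrier (G Mod H)) \<longleftrightarrow> (\<forall>k::int. k \<noteq> 0 \<longrightarrow> g [^] k \<notin> H)"
proof -
  interpret Q: group "G Mod H" by (rule factorgroup_is_group)
  obtain c where c: "c \<in> carrier (G Mod H)" "subgroup_generated (G Mod H) {c} = G Mod H"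
    using assms unfolding cyclic_group_def by blast
  obtain g where g: "g \<in> carrier G" "c = H #> g" using c(1) by (auto simp: carrier_FactGroup)
  have pow: "c [^]\<^bsub>G Mod H\<^esub> k = H #> g [^] k" for k :: int
    using FactGroup_int_pow[OF g(1)] g(2) by simp
  show thesis
  proof
    show "g \<in> carrier G" by (rule g(1))
    show "\<exists>k::int. H #> x = H #> g [^] k" if "x \<in> carrier G" for x
    proof -
      have "H #> x \<in> carrier (subgroup_generated (G Mod H) {c})"
        using that c(2) by (simp add: carrier_FactGroup)
      then show ?thesis using Q.carrier_subgroup_generated_by_singleton[OF c(1)] pow by auto
    qed
    have "finite (carrier (G Mod H)) \<longleftrightarrow> (\<exists>k::int. k \<noteq> 0 \<and> g [^] k \<in> H)"
      using Q.finite_cyclic_subgroup_int[OF c(1)] c(2) by (simp add: pow rcos_eq_self_iff g(1))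
    then show "infinite (carrier (G Mod H)) \<longleftrightarrow> (\<forall>k::int. k \<noteq> 0 \<longrightarrow> g [^] k \<notin> H)" by blast
  qed
qed

context group
begin

context
  fixes \<phi> :: "'a \<Rightarrow> int"
  assumes additive: "\<And>x y. x \<in> carrier G \<Longrightarrow> y \<in> carrier G \<Longrightarrow> \<phi> (x \<otimes> y) = \<phi> x + \<phi> y"
begin

interpretation \<phi>: group_hom G integer_group \<phi>
  by (simp add: group_hom_def group_hom_axioms_def is_group homI additive)

lemma kernel_int_eq: "kernel G integer_group \<phi> = {x \<in> carrier G. \<phi> x = 0}"
  by (auto simp: kernel_def)

lemma int_kernel_normal: "{x \<in> carrier G. \<phi> x = 0} \<lhd> G"
  using \<phi>.normal_kernel by (simp add: kernel_int_eq)

lemma int_kernel_FactGroup_surj: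
  assumes surj: "\<phi> ` carrier G = UNIV"
  shows "cyclic_group (G Mod {x \<in> carrier G. \<phi> x = 0})"
    and "infinite (carrier (G Mod {x \<in> carrier G. \<phi> x = 0}))"
proof -
  have iso: "(\<lambda>C. the_elem (\<phi> ` C)) \<in> iso (G Mod {x \<in> carrier G. \<phi> x = 0}) integer_group"
    using \<phi>.FactGroup_iso_set surj by (simp add: kernel_int_eq)
  then have "G Mod {x \<in> carrier G. \<phi> x = 0} \<cong> integer_group" unfolding is_iso_def by blast
  then show "cyclic_group (G Mod {x \<in> carrier G. \<phi> x = 0})"
    using isomorphic_group_cyclicity[OF _ normal.factorgroup_is_group[OF int_kernel_normal]
        group_integer_group] by simp
  show "infinite (carrier (G Mod {x \<in> carrier G. \<phi> x = 0}))"
    using iso bij_betw_finite infinite_UNIV_int unfolding iso_def by fastforce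
qed

end

lemma int_kernel_FactGroup_zero:
  assumes "\<And>x. x \<in> carrier G \<Longrightarrow> \<phi> x = 0"
  shows "cyclic_group (G Mod {x \<in> carrier G. \<phi> x = (0::int)})"
    and "finite (carrier (G Mod {x \<in> carrier G. \<phi> x = 0}))"
proof -
  have kernel: "{x \<in> carrier G. \<phi> x = 0} = carrier G" using assms by blast
  have "carrier (G Mod carrier G) = {carrier G}"
    using coset_join2[OF _ subgroup_self] by (auto simp: carrier_FactGroup)
  moreover have "group (G Mod carrier G)"
    using normal.factorgroup_is_group[OF normal_invI[OF subgroup_self]] by simp
  ultimately show "cyclic_group (G Mod {x \<in> carrier G. \<phi> x = 0})"
    and "finite (carrier (G Mod {x \<in> carrier G. \<phi> x = 0}))"
    unfolding kernel by (auto intro: trivial_imp_cyclic_group simp: trivial_group_def)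
qed

end

section \<open>An invariant of cyclic subnormal series\<close>

definition hirsch_rank :: "('a \<Rightarrow> 'x \<Rightarrow> int) \<Rightarrow> ('a \<Rightarrow> 'y \<Rightarrow> int) \<Rightarrow> 'a set \<Rightarrow> nat" where
  "hirsch_rank \<psi> \<sigma> K = int_rank (\<psi> ` K) + int_rank (\<sigma> ` {x \<in> K. \<psi> x = 0})"

locale abelian_coordinates = group G for G (structure) +
  fixes \<psi> :: "'a \<Rightarrow> 'x \<Rightarrow> int" and I :: "'x set" and \<sigma> :: "'a \<Rightarrow> 'y \<Rightarrow> int" and J :: "'y set"
  assumes \<psi>_mult: "x \<in> carrier G \<Longrightarrow> y \<in> carrier G \<Longrightarrow> \<psi> (x \<otimes> y) = \<psi> x + \<psi> y"
    and \<sigma>_mult: "x \<in> carrier G \<Longrightarrow> y \<in> carrier G \<Longrightarrow> \<psi> x = 0 \<Longrightarrow> \<psi> y = 0 \<Longrightarrow>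
      \<sigma> (x \<otimes> y) = \<sigma> x + \<sigma> y"
    and \<sigma>_inj: "inj_on \<sigma> {x \<in> carrier G. \<psi> x = 0}"
    and finite_I: "finite I" and \<psi>_support: "x \<in> carrier G \<Longrightarrow> i \<notin> I \<Longrightarrow> \<psi> x i = 0"
    and finite_J: "finite J" and \<sigma>_support: "x \<in> carrier G \<Longrightarrow> \<psi> x = 0 \<Longrightarrow> j \<notin> J \<Longrightarrow> \<sigma> x j = 0"
begin

abbreviation \<psi>_kernel :: "'a set" where
  "\<psi>_kernel \<equiv> {x \<in> carrier G. \<psi> x = 0}"

lemma \<psi>_one: "\<psi> \<one> = 0"
  by (rule additive_one[OF is_group subgroup_self \<psi>_mult])

lemma \<psi>_int_pow: "x \<in> carrier G \<Longrightarrow> \<psi> (x [^] (k::int)) = int_scale k (\<psi> x)"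
  by (rule additive_int_pow[OF is_group subgroup_self \<psi>_mult])

lemma \<psi>_inv: "x \<in> carrier G \<Longrightarrow> \<psi> (inv x) = - \<psi> x"
  by (rule additive_inv[OF is_group subgroup_self \<psi>_mult])

lemma subgroup_\<psi>_kernel: "subgroup \<psi>_kernel G"
  by (rule subgroupI) (auto simp: \<psi>_mult \<psi>_inv \<psi>_one)

lemma \<sigma>_additive: "x \<in> \<psi>_kernel \<Longrightarrow> y \<in> \<psi>_kernel \<Longrightarrow> \<sigma> (x \<otimes> y) = \<sigma> x + \<sigma> y"
  using \<sigma>_mult by simp

lemma \<sigma>_int_pow: "x \<in> \<psi>_kernel \<Longrightarrow> \<sigma> (x [^] (k::int)) = int_scale k (\<sigma> x)"
  by (rule additive_int_pow[OF is_group subgroup_\<psi>_kernel \<sigma>_additive])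

lemma abelian_coordinates_subgroup:
  assumes "subgroup K G" shows "abelian_coordinates (G\<lparr>carrier := K\<rparr>) \<psi> I \<sigma> J"
proof -
  have "inj_on \<sigma> {x \<in> K. \<psi> x = 0}"
    by (rule inj_on_subset[OF \<sigma>_inj]) (use subgroup.subset[OF assms] in blast)
  then show ?thesis
    using subgroup.subset[OF assms] finite_I finite_J
    by (intro abelian_coordinates.intro subgroup.subgroup_is_group[OF assms is_group], unfold_locales)
      (auto intro: \<psi>_mult \<sigma>_mult \<psi>_support \<sigma>_support)
qed

context
  fixes N g
  assumes N: "N \<lhd> G" and g: "g \<in> carrier G"
    and cover: "\<And>x. x \<in> carrier G \<Longrightarrow> \<exists>k::int. N #> x = N #> g [^] k"
    and torsion: "infinite (carrier (G Mod N)) \<longleftrightarrow> (\<forall>k::int. k \<noteq> 0 \<longrightarrow> g [^] k \<notin> N)"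
begin

interpretation N: normal N G by (rule N)

lemma int_rank_\<psi>_FactGroup:
  "int_rank (\<psi> ` carrier G) =
    int_rank (\<psi> ` N) + (if \<exists>m>0. int_scale m (\<psi> g) \<in> \<psi> ` N then 0 else 1)"
proof (rule int_rank_additive_image[OF is_group subgroup_self _ N.subgroup_axioms N.subset finite_I])
  show "\<exists>m>0. \<exists>j. x [^] (m::int) \<otimes> inv (g [^] (j::int)) \<in> N" if "x \<in> carrier G" for x
    using cover[OF that] N.rcos_eq_iff that g by (metis int_pow_1 int_pow_closed zero_less_one)
qed (use \<psi>_mult \<psi>_support g in auto)

lemma scale_\<psi>_generator_zero:
  assumes no_multiple: "\<not> (\<exists>m>0. int_scale m (\<psi> g) \<in> \<psi> ` N)" and "int_scale k (\<psi> g) \<in> \<psi> ` N"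
  shows "k = 0"
  using add_subgroup_pos_multiple[OF additive_image_add_subgroup[OF is_group subgroup_self]] assms
    N.subgroup_axioms N.subset \<psi>_mult by blast

lemma \<psi>_kernel_subset_if_no_multiple:
  assumes no_multiple: "\<not> (\<exists>m>0. int_scale m (\<psi> g) \<in> \<psi> ` N)"
  shows "\<psi>_kernel \<subseteq> N"
proof
  fix x assume x: "x \<in> \<psi>_kernel"
  obtain k :: int where "N #> x = N #> g [^] k" using cover x by blast
  then have in_N: "x \<otimes> inv (g [^] k) \<in> N" using N.rcos_eq_iff x g by simp
  have "\<psi> (x \<otimes> inv (g [^] k)) = int_scale (- k) (\<psi> g)"
    using x g by (simp add: \<psi>_mult \<psi>_inv \<psi>_int_pow int_scale_def fun_eq_iff)
  then have "- k = 0" using scale_\<psi>_generator_zero[OF no_multiple] in_N by (metis image_eqI)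
  then show "x \<in> N" using in_N x by simp
qed

lemma infinite_FactGroup_if_no_multiple:
  assumes no_multiple: "\<not> (\<exists>m>0. int_scale m (\<psi> g) \<in> \<psi> ` N)"
  shows "infinite (carrier (G Mod N))"
  unfolding torsion
  using scale_\<psi>_generator_zero[OF no_multiple] \<psi>_int_pow[OF g] by (metis image_eqI)

lemma \<psi>_kernel_cover:
  assumes y: "y \<in> \<psi>_kernel" "N #> y = N #> g [^] (m::int)" and w: "w \<in> \<psi>_kernel"
  shows "\<exists>j. w [^] m \<otimes> inv (y [^] (j::int)) \<in> N \<inter> \<psi>_kernel"
proof -
  obtain j :: int where j: "N #> w = N #> g [^] j" using cover w by blast
  have "N #> w [^] m = N #> g [^] (j * m)"
    using N.rcos_int_pow_eq[OF _ _ j] w g by (simp add: int_pow_pow)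
  also have "\<dots> = N #> y [^] j"
    using N.rcos_int_pow_eq[OF _ _ y(2)] y g by (simp add: int_pow_pow mult.commute)
  finally have "w [^] m \<otimes> inv (y [^] j) \<in> N" using N.rcos_eq_iff w y by simp
  moreover have "\<psi> (w [^] m \<otimes> inv (y [^] j)) = 0"
    using w y by (simp add: \<psi>_mult \<psi>_inv \<psi>_int_pow int_scale_def fun_eq_iff)
  ultimately show ?thesis using w y by auto
qed

lemma \<sigma>_multiple_iff_finite:
  assumes m: "(m::int) \<noteq> 0" and y: "y \<in> \<psi>_kernel" "N #> y = N #> g [^] m"
  shows "(\<exists>l>0. int_scale l (\<sigma> y) \<in> \<sigma> ` (N \<inter> \<psi>_kernel)) \<longleftrightarrow> finite (carrier (G Mod N))"
proof -
  have y_pow: "y [^] l \<in> N \<longleftrightarrow> g [^] (m * l) \<in> N" for l :: int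
  proof -
    have "N #> y [^] l = N #> g [^] (m * l)"
      using N.rcos_int_pow_eq[OF _ _ y(2)] y g by (simp add: int_pow_pow)
    then show ?thesis using y g by (simp add: N.rcos_eq_self_iff[symmetric])
  qed
  have image: "int_scale l (\<sigma> y) \<in> \<sigma> ` (N \<inter> \<psi>_kernel) \<longleftrightarrow> y [^] l \<in> N" for l :: int
  proof
    assume "int_scale l (\<sigma> y) \<in> \<sigma> ` (N \<inter> \<psi>_kernel)"
    then obtain w where "int_scale l (\<sigma> y) = \<sigma> w" "w \<in> N \<inter> \<psi>_kernel" by (rule imageE)
    then have "w \<in> N \<inter> \<psi>_kernel" "\<sigma> w = \<sigma> (y [^] l)" using \<sigma>_int_pow[OF y(1)] by simp_all
    moreover have "y [^] l \<in> \<psi>_kernel" using subgroup_int_pow_closed[OF subgroup_\<psi>_kernel y(1)] .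
    ultimately show "y [^] l \<in> N" using inj_onD[OF \<sigma>_inj, of w "y [^] l"] by blast
  next
    assume "y [^] l \<in> N"
    then have "y [^] l \<in> N \<inter> \<psi>_kernel" using subgroup_int_pow_closed[OF subgroup_\<psi>_kernel y(1)] by blast
    then show "int_scale l (\<sigma> y) \<in> \<sigma> ` (N \<inter> \<psi>_kernel)" using \<sigma>_int_pow[OF y(1)] by (metis image_eqI)
  qed
  have add_subgroup: "add_subgroup (\<sigma> ` (N \<inter> \<psi>_kernel))"
    using additive_image_add_subgroup[OF is_group subgroup_\<psi>_kernel \<sigma>_additive]
      subgroups_Inter_pair[OF N.subgroup_axioms subgroup_\<psi>_kernel] by blast
  show ?thesis
  proof
    assume "\<exists>l>0. int_scale l (\<sigma> y) \<in> \<sigma> ` (N \<inter> \<psi>_kernel)"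
    then obtain l :: int where "l > 0" "g [^] (m * l) \<in> N" using image y_pow by blast
    moreover have "m * l \<noteq> 0" using m \<open>l > 0\<close> by simp
    ultimately show "finite (carrier (G Mod N))" using torsion by blast
  next
    assume "finite (carrier (G Mod N))"
    then obtain k :: int where "k \<noteq> 0" "g [^] k \<in> N" using torsion by blast
    moreover have "g [^] (m * k) = (g [^] k) [^] m" using g by (simp add: int_pow_pow mult.commute)
    ultimately have "y [^] k \<in> N"
      using y_pow subgroup_int_pow_closed[OF N.subgroup_axioms] by simp
    then show "\<exists>l>0. int_scale l (\<sigma> y) \<in> \<sigma> ` (N \<inter> \<psi>_kernel)"
      using add_subgroup_pos_multiple[OF add_subgroup \<open>k \<noteq> 0\<close>] image by blast
  qed
qed

lemma int_rank_\<sigma>_FactGroup: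
  assumes m: "(m::int) > 0" and h: "h \<in> N" "\<psi> h = int_scale m (\<psi> g)"
  shows "int_rank (\<sigma> ` \<psi>_kernel) =
    int_rank (\<sigma> ` (N \<inter> \<psi>_kernel)) + (if infinite (carrier (G Mod N)) then 1 else 0)"
proof -
  txt \<open>\<open>y\<close> lies in \<open>ker \<psi>\<close> and represents \<open>g\<^sup>m\<close> modulo \<open>N\<close>, so it generates the
    factor of the kernels up to finite index.\<close>
  define y where "y = inv h \<otimes> g [^] m"
  have hG: "h \<in> carrier G" using h(1) N.subset by blast
  have y: "y \<in> \<psi>_kernel"
    using hG g h(2) by (simp add: y_def \<psi>_mult \<psi>_inv \<psi>_int_pow)
  have "y \<otimes> inv (g [^] m) = inv h" using hG g by (simp add: y_def m_assoc)
  then have coset_y: "N #> y = N #> g [^] m" using N.rcos_eq_iff y g h(1) by simp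
  have "int_rank (\<sigma> ` \<psi>_kernel) = int_rank (\<sigma> ` (N \<inter> \<psi>_kernel))
      + (if \<exists>l>0. int_scale l (\<sigma> y) \<in> \<sigma> ` (N \<inter> \<psi>_kernel) then 0 else 1)"
  proof (rule int_rank_additive_image[OF is_group subgroup_\<psi>_kernel \<sigma>_additive _ _ finite_J _ y])
    show "subgroup (N \<inter> \<psi>_kernel) G"
      by (rule subgroups_Inter_pair[OF N.subgroup_axioms subgroup_\<psi>_kernel])
    show "\<exists>m>0. \<exists>j. w [^] (m::int) \<otimes> inv (y [^] (j::int)) \<in> N \<inter> \<psi>_kernel" if "w \<in> \<psi>_kernel" for w
      using \<psi>_kernel_cover[OF y coset_y that] m by blast
  qed (use \<sigma>_support in auto)
  then show ?thesis using \<sigma>_multiple_iff_finite[OF _ y coset_y] m by simp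
qed

end

lemma hirsch_rank_FactGroup:
  assumes N: "N \<lhd> G" and cyclic: "cyclic_group (G Mod N)"
  shows "hirsch_rank \<psi> \<sigma> (carrier G) =
    hirsch_rank \<psi> \<sigma> N + (if infinite (carrier (G Mod N)) then 1 else 0)"
proof -
  interpret N: normal N G by (rule N)
  obtain g where g: "g \<in> carrier G"
    and cover: "\<And>x. x \<in> carrier G \<Longrightarrow> \<exists>k::int. N #> x = N #> g [^] k"
    and torsion: "infinite (carrier (G Mod N)) \<longleftrightarrow> (\<forall>k::int. k \<noteq> 0 \<longrightarrow> g [^] k \<notin> N)"
    using N.cyclic_FactGroup_generator[OF cyclic] by blast
  note facts = N g cover torsion
  have N_kernel: "{x \<in> N. \<psi> x = 0} = N \<inter> \<psi>_kernel" using N.subset by blast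
  txt \<open>Either some power of \<open>g\<close> is invisible to \<open>\<psi>\<close> modulo \<open>N\<close>, and the factor shows up in
    the kernels, or \<open>\<psi>\<close> detects it and the kernels coincide.\<close>
  show ?thesis
  proof (cases "\<exists>m>0. int_scale m (\<psi> g) \<in> \<psi> ` N")
    case True
    then obtain m h where "m > 0" "int_scale m (\<psi> g) = \<psi> h" "h \<in> N" by (auto elim!: imageE)
    then show ?thesis
      using int_rank_\<psi>_FactGroup[OF facts] int_rank_\<sigma>_FactGroup[OF facts] True N_kernel
      unfolding hirsch_rank_def by simp
  next
    case False
    then have "\<psi>_kernel = N \<inter> \<psi>_kernel" using \<psi>_kernel_subset_if_no_multiple[OF facts] by blast
    then show ?thesis
      using int_rank_\<psi>_FactGroup[OF facts] infinite_FactGroup_if_no_multiple[OF facts] False N_kernel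
      unfolding hirsch_rank_def by simp
  qed
qed

lemma hirsch_rank_one: "hirsch_rank \<psi> \<sigma> {\<one>} = 0"
proof -
  have "{x \<in> {\<one>}. \<psi> x = 0} = {\<one>}" using \<psi>_one by auto
  moreover have "\<sigma> \<one> = 0" by (rule additive_one[OF is_group subgroup_\<psi>_kernel \<sigma>_additive])
  ultimately show ?thesis by (simp add: hirsch_rank_def \<psi>_one int_rank_zero)
qed

lemma num_infinite_factors_eq_hirsch_rank:
  assumes "cyclic_subnormal_series G H k S"
  shows "num_infinite_factors G k S = hirsch_rank \<psi> \<sigma> H"
proof -
  let ?inf = "\<lambda>i. infinite (carrier (G\<lparr>carrier := S i\<rparr> Mod S (Suc i)))"
  have S: "S 0 = H" "S k = {\<one>}" "\<And>i. i \<le> k \<Longrightarrow> subgroup (S i) G"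
    "\<And>i. i < k \<Longrightarrow> S (Suc i) \<lhd> G\<lparr>carrier := S i\<rparr> \<and> cyclic_group (G\<lparr>carrier := S i\<rparr> Mod S (Suc i))"
    using assms unfolding cyclic_subnormal_series_def by auto
  have "hirsch_rank \<psi> \<sigma> (S 0) = hirsch_rank \<psi> \<sigma> (S j) + card {i. i < j \<and> ?inf i}" if "j \<le> k" for j
    using that
  proof (induction j)
    case (Suc j)
    interpret S: abelian_coordinates "G\<lparr>carrier := S j\<rparr>" \<psi> I \<sigma> J
      using abelian_coordinates_subgroup S(3) Suc.prems by simp
    have "hirsch_rank \<psi> \<sigma> (S j) = hirsch_rank \<psi> \<sigma> (S (Suc j)) + (if ?inf j then 1 else 0)"
      using S.hirsch_rank_FactGroup S(4) Suc.prems by simp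
    moreover have "{i. i < Suc j \<and> ?inf i} = {i. i < j \<and> ?inf i} \<union> (if ?inf j then {j} else {})"
      by (auto simp: less_Suc_eq)
    ultimately show ?case using Suc by (simp add: card_Un_disjoint)
  qed simp
  from this[of k] show ?thesis using S hirsch_rank_one unfolding num_infinite_factors_def by simp
qed

lemma hirsch_eq_num_infinite_factors:
  assumes "cyclic_subnormal_series G H k S"
  shows "hirsch G H = num_infinite_factors G k S"
  unfolding hirsch_def
proof (rule the_equality)
  show "\<exists>k' S'. cyclic_subnormal_series G H k' S' \<and>
      num_infinite_factors G k' S' = num_infinite_factors G k S"
    using assms by blast
  show "m = num_infinite_factors G k S"
    if "\<exists>k' S'. cyclic_subnormal_series G H k' S' \<and> num_infinite_factors G k' S' = m" for m
    using that assms num_infinite_factors_eq_hirsch_rank by metis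
qed

end

lemma GGamma_simps:
  "g \<in> carrier (GGamma n E) \<longleftrightarrow>
     (\<forall>i. n \<le> i \<longrightarrow> fst g i = 0) \<and> (\<forall>p. p \<notin> nonedges n E \<longrightarrow> snd g p = 0)"
  "g \<otimes>\<^bsub>GGamma n E\<^esub> h = GGamma_mult n E g h"
  "\<one>\<^bsub>GGamma n E\<^esub> = (0, 0)"
  by (simp_all add: GGamma_def zero_fun_def)

lemma fst_GGamma_mult: "fst (GGamma_mult n E g h) = fst g + fst h"
  by (simp add: GGamma_mult_def plus_fun_def)

lemma snd_GGamma_mult: "fst g = 0 \<Longrightarrow> snd (GGamma_mult n E g h) = snd g + snd h"
  by (simp add: GGamma_mult_def fun_eq_iff)

lemma group_GGamma: "group (GGamma n E)"
proof (rule groupI)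
  fix x assume x: "x \<in> carrier (GGamma n E)"
  let ?y = "(- fst x, \<lambda>p. - snd x p + (if p \<in> nonedges n E then fst x (snd p) * fst x (fst p) else 0))"
  have "?y \<in> carrier (GGamma n E)" "?y \<otimes>\<^bsub>GGamma n E\<^esub> x = \<one>\<^bsub>GGamma n E\<^esub>"
    using x by (auto simp: GGamma_simps GGamma_mult_def fun_eq_iff)
  then show "\<exists>y \<in> carrier (GGamma n E). y \<otimes>\<^bsub>GGamma n E\<^esub> x = \<one>\<^bsub>GGamma n E\<^esub>" by blast
qed (auto simp: GGamma_simps GGamma_mult_def algebra_simps fun_eq_iff)

lemma finite_nonedges: "finite (nonedges n E)"
  by (rule finite_subset[of _ "{0..<n} \<times> {0..<n}"]) (auto simp: nonedges_def)

lemma GGamma_abelian_coordinates: "abelian_coordinates (GGamma n E) fst {0..<n} snd (nonedges n E)"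
  by (intro abelian_coordinates.intro group_GGamma abelian_coordinates_axioms.intro finite_nonedges)
    (auto simp: GGamma_simps fst_GGamma_mult snd_GGamma_mult inj_on_def prod_eq_iff)

section \<open>A cyclic series through the centraliser\<close>

definition support_subgroup ::
    "nat \<Rightarrow> (nat \<Rightarrow> nat \<Rightarrow> bool) \<Rightarrow> nat set \<Rightarrow> ((nat \<Rightarrow> int) \<times> (nat \<times> nat \<Rightarrow> int)) set" where
  "support_subgroup n E V = {g \<in> carrier (GGamma n E). \<forall>j. j \<notin> V \<longrightarrow> fst g j = 0}"

lemma subgroup_support_subgroup: "subgroup (support_subgroup n E V) (GGamma n E)"
proof -
  interpret abelian_coordinates "GGamma n E" fst "{0..<n}" snd "nonedges n E"
    by (rule GGamma_abelian_coordinates)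
  show ?thesis
  proof (rule subgroupI)
    have "\<one>\<^bsub>GGamma n E\<^esub> \<in> support_subgroup n E V" by (simp add: support_subgroup_def \<psi>_one)
    then show "support_subgroup n E V \<noteq> {}" by blast
  qed (auto simp: support_subgroup_def \<psi>_inv \<psi>_mult)
qed

lemma GGamma_commute_iff:
  "g \<otimes>\<^bsub>GGamma n E\<^esub> h = h \<otimes>\<^bsub>GGamma n E\<^esub> g \<longleftrightarrow>
    (\<forall>(i, j) \<in> nonedges n E. fst g j * fst h i = fst h j * fst g i)"
  by (auto simp: GGamma_simps GGamma_mult_def fun_eq_iff algebra_simps split: if_splits)

lemma commute_vertex_power_iff:
  assumes sym: "\<And>i j. E i j \<Longrightarrow> E j i" and z: "z \<noteq> 0" and i0: "i0 < n"
    and h: "h \<in> carrier (GGamma n E)"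
  defines "g \<equiv> \<lambda>i. if i = i0 then z else 0"
  shows "(\<forall>(i, j) \<in> nonedges n E. fst h j * g i = g j * fst h i) \<longleftrightarrow>
    (\<forall>k. k \<notin> insert i0 {j. j < n \<and> E i0 j} \<longrightarrow> fst h k = 0)"
proof
  assume commute: "\<forall>(i, j) \<in> nonedges n E. fst h j * g i = g j * fst h i"
  show "\<forall>k. k \<notin> insert i0 {j. j < n \<and> E i0 j} \<longrightarrow> fst h k = 0"
  proof (intro allI impI)
    fix k assume k: "k \<notin> insert i0 {j. j < n \<and> E i0 j}"
    consider "n \<le> k" | "i0 < k" "k < n" | "k < i0" using k by fastforce
    then show "fst h k = 0"
    proof cases
      case 1
      then show ?thesis using h by (simp add: GGamma_simps)
    next
      case 2
      then have "(i0, k) \<in> nonedges n E" using k by (simp add: nonedges_def)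
      then show ?thesis using commute z 2 by (auto simp: g_def)
    next
      case 3
      then have "(k, i0) \<in> nonedges n E" using k sym i0 by (auto simp: nonedges_def)
      then show ?thesis using commute z 3 by (auto simp: g_def)
    qed
  qed
next
  assume "\<forall>k. k \<notin> insert i0 {j. j < n \<and> E i0 j} \<longrightarrow> fst h k = 0"
  then show "\<forall>(i, j) \<in> nonedges n E. fst h j * g i = g j * fst h i"
    using sym by (auto simp: nonedges_def g_def)
qed

lemma centralizer_vertex_power:
  assumes sym: "\<And>i j. E i j \<Longrightarrow> E j i" and z: "z \<noteq> 0" and i0: "i0 < n"
  shows "centralizer (GGamma n E) ((\<lambda>i. if i = i0 then z else 0), t) =
    support_subgroup n E (insert i0 {j. j < n \<and> E i0 j})"
proof -
  have "h \<in> centralizer (GGamma n E) ((\<lambda>i. if i = i0 then z else 0), t) \<longleftrightarrow>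
      h \<in> support_subgroup n E (insert i0 {j. j < n \<and> E i0 j})" for h
  proof (cases "h \<in> carrier (GGamma n E)")
    case True
    then show ?thesis using commute_vertex_power_iff[where E = E and h = h, OF sym z i0 True]
      by (simp add: centralizer_def support_subgroup_def GGamma_commute_iff)
  qed (simp add: centralizer_def support_subgroup_def)
  then show ?thesis by blast
qed

definition coordinate :: "nat \<Rightarrow> (nat \<Rightarrow> nat \<Rightarrow> bool) \<Rightarrow> nat \<Rightarrow>
    (nat \<Rightarrow> int) \<times> (nat \<times> nat \<Rightarrow> int) \<Rightarrow> int" where
  "coordinate n E m g =
    (if m < n then fst g m else snd g (sorted_list_of_set (nonedges n E) ! (m - n)))"

definition coordinate_series :: "nat \<Rightarrow> (nat \<Rightarrow> nat \<Rightarrow> bool) \<Rightarrow> nat set \<Rightarrow> nat \<Rightarrow>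
    ((nat \<Rightarrow> int) \<times> (nat \<times> nat \<Rightarrow> int)) set" where
  "coordinate_series n E V m = {g \<in> support_subgroup n E V. \<forall>l<m. coordinate n E l g = 0}"

lemma coordinate_series_Suc:
  "coordinate_series n E V (Suc m) = {g \<in> coordinate_series n E V m. coordinate n E m g = 0}"
  by (auto simp: coordinate_series_def less_Suc_eq)

lemma fst_coordinate_series:
  assumes g: "g \<in> coordinate_series n E V m" and m: "n \<le> m"
  shows "fst g = 0"
proof
  fix i
  show "fst g i = 0 i"
  proof (cases "i < n")
    case True
    then have "coordinate n E i g = 0" using g m by (simp add: coordinate_series_def)
    then show ?thesis using True by (simp add: coordinate_def)
  next
    case False
    then show ?thesis using g by (simp add: coordinate_series_def support_subgroup_def GGamma_simps)
  qed
qed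

lemma coordinate_additive:
  assumes "x \<in> coordinate_series n E V m" "y \<in> coordinate_series n E V m"
  shows "coordinate n E m (x \<otimes>\<^bsub>GGamma n E\<^esub> y) = coordinate n E m x + coordinate n E m y"
proof (cases "m < n")
  case True
  then show ?thesis by (simp add: coordinate_def GGamma_simps fst_GGamma_mult)
next
  case False
  then have "fst x = 0" using fst_coordinate_series[OF assms(1)] by simp
  then show ?thesis using False by (simp add: coordinate_def GGamma_simps snd_GGamma_mult)
qed

lemma coordinate_zero:
  "m < n \<Longrightarrow> m \<notin> V \<Longrightarrow> x \<in> coordinate_series n E V m \<Longrightarrow> coordinate n E m x = 0"
  by (simp add: coordinate_series_def support_subgroup_def coordinate_def)

lemma coordinate_surj:
  assumes m: "m < n + card (nonedges n E)" and V: "m \<in> V \<or> n \<le> m"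
  shows "coordinate n E m ` coordinate_series n E V m = UNIV"
proof -
  let ?ps = "sorted_list_of_set (nonedges n E)"
  have ps: "set ?ps = nonedges n E" "distinct ?ps" "length ?ps = card (nonedges n E)"
    by (simp_all add: finite_nonedges)
  have "\<exists>g \<in> coordinate_series n E V m. coordinate n E m g = c" for c
  proof (cases "m < n")
    case True
    let ?g = "(\<lambda>i. if i = m then c else 0, 0) :: (nat \<Rightarrow> int) \<times> (nat \<times> nat \<Rightarrow> int)"
    have "?g \<in> coordinate_series n E V m"
      using True V by (auto simp: coordinate_series_def support_subgroup_def coordinate_def GGamma_simps)
    moreover have "coordinate n E m ?g = c" using True by (simp add: coordinate_def)
    ultimately show ?thesis by (rule rev_bexI)
  next
    case False
    let ?p = "?ps ! (m - n)"
    have p: "?p \<in> nonedges n E" using m False ps by (metis add_diff_inverse_nat nat_add_left_cancel_less nth_mem)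
    have earlier: "?ps ! l \<noteq> ?p" if "l < m - n" for l
      using nth_eq_iff_index_eq[OF ps(2)] that m False ps(3) by auto
    let ?g = "(0, \<lambda>q. if q = ?p then c else 0) :: (nat \<Rightarrow> int) \<times> (nat \<times> nat \<Rightarrow> int)"
    have "coordinate n E l ?g = 0" if "l < m" for l
      using earlier[of "l - n"] that False by (simp add: coordinate_def)
    moreover have "?g \<in> carrier (GGamma n E)" using p by (auto simp: GGamma_simps)
    ultimately have g: "?g \<in> coordinate_series n E V m"
      by (simp add: coordinate_series_def support_subgroup_def)
    have "coordinate n E m ?g = c" using False by (simp add: coordinate_def)
    then show ?thesis by (rule bexI[OF _ g])
  qed
  then show ?thesis by (metis UNIV_eq_I imageI)
qed

lemma coordinate_series_last:
  "coordinate_series n E V (n + card (nonedges n E)) = {\<one>\<^bsub>GGamma n E\<^esub>}"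
proof -
  let ?ps = "sorted_list_of_set (nonedges n E)"
  have "g = \<one>\<^bsub>GGamma n E\<^esub>" if g: "g \<in> coordinate_series n E V (n + card (nonedges n E))" for g
    unfolding GGamma_simps
  proof
    show "fst g = fst (0, 0)" using fst_coordinate_series[OF g] by simp
    have "snd g p = 0" for p
    proof (cases "p \<in> nonedges n E")
      case True
      then obtain l where l: "l < card (nonedges n E)" "p = ?ps ! l"
        by (metis finite_nonedges in_set_conv_nth length_sorted_list_of_set set_sorted_list_of_set)
      then have "coordinate n E (n + l) g = 0" using g by (simp add: coordinate_series_def)
      then show ?thesis using l by (simp add: coordinate_def)
    next
      case False
      moreover have "g \<in> carrier (GGamma n E)"
        using g by (simp add: coordinate_series_def support_subgroup_def)
      ultimately show ?thesis by (cases p) (simp add: GGamma_simps)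
    qed
    then show "snd g = snd (0, 0)" by (simp add: fun_eq_iff)
  qed
  moreover have "\<one>\<^bsub>GGamma n E\<^esub> \<in> coordinate_series n E V (n + card (nonedges n E))"
    by (simp add: coordinate_series_def support_subgroup_def coordinate_def GGamma_simps)
  ultimately show ?thesis by blast
qed

lemma coordinate_series_step:
  assumes m: "m < n + card (nonedges n E)"
    and sub: "subgroup (coordinate_series n E V m) (GGamma n E)"
  defines "H \<equiv> GGamma n E\<lparr>carrier := coordinate_series n E V m\<rparr>"
  shows "coordinate_series n E V (Suc m) \<lhd> H"
    and "cyclic_group (H Mod coordinate_series n E V (Suc m))"
    and "infinite (carrier (H Mod coordinate_series n E V (Suc m))) \<longleftrightarrow> m \<in> V \<or> n \<le> m"
proof -
  interpret H: group H unfolding H_def by (rule subgroup.subgroup_is_group[OF sub group_GGamma])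
  have additive: "coordinate n E m (x \<otimes>\<^bsub>H\<^esub> y) = coordinate n E m x + coordinate n E m y"
    if "x \<in> carrier H" "y \<in> carrier H" for x y
    using coordinate_additive that by (simp add: H_def)
  have kernel: "{x \<in> carrier H. coordinate n E m x = 0} = coordinate_series n E V (Suc m)"
    by (simp add: H_def coordinate_series_Suc)
  show "coordinate_series n E V (Suc m) \<lhd> H"
    using H.int_kernel_normal[OF additive] kernel by simp
  have "cyclic_group (H Mod coordinate_series n E V (Suc m)) \<and>
      (infinite (carrier (H Mod coordinate_series n E V (Suc m))) \<longleftrightarrow> m \<in> V \<or> n \<le> m)"
  proof (cases "m \<in> V \<or> n \<le> m")
    case True
    then have "coordinate n E m ` carrier H = UNIV" using coordinate_surj[OF m] by (simp add: H_def)
    then show ?thesis using H.int_kernel_FactGroup_surj[OF additive] kernel True by simp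
  next
    case False
    then have "coordinate n E m x = 0" if "x \<in> carrier H" for x
      using coordinate_zero[of m n V x E] False that by (simp add: H_def)
    then show ?thesis using H.int_kernel_FactGroup_zero[of "coordinate n E m"] kernel False by simp
  qed
  then show "cyclic_group (H Mod coordinate_series n E V (Suc m))"
    and "infinite (carrier (H Mod coordinate_series n E V (Suc m))) \<longleftrightarrow> m \<in> V \<or> n \<le> m"
    by simp_all
qed

lemma subgroup_coordinate_series:
  "m \<le> n + card (nonedges n E) \<Longrightarrow> subgroup (coordinate_series n E V m) (GGamma n E)"
proof (induction m)
  case 0
  then show ?case using subgroup_support_subgroup by (simp add: coordinate_series_def)
next
  case (Suc m)
  then have m: "m < n + card (nonedges n E)" and sub: "subgroup (coordinate_series n E V m) (GGamma n E)"
    by simp_all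
  show ?case
    using group.incl_subgroup[OF group_GGamma sub normal_imp_subgroup[OF coordinate_series_step(1)[OF m sub]]]
    by simp
qed

lemma cyclic_subnormal_coordinate_series:
  "cyclic_subnormal_series (GGamma n E) (support_subgroup n E V)
    (n + card (nonedges n E)) (coordinate_series n E V)"
  unfolding cyclic_subnormal_series_def
  using subgroup_coordinate_series coordinate_series_step coordinate_series_last
  by (auto simp: coordinate_series_Suc coordinate_series_def)

lemma num_infinite_factors_coordinate_series:
  assumes V: "V \<subseteq> {0..<n}"
  shows "num_infinite_factors (GGamma n E) (n + card (nonedges n E)) (coordinate_series n E V) =
    card V + card (nonedges n E)"
proof -
  let ?k = "n + card (nonedges n E)"
  have "infinite (carrier (GGamma n E\<lparr>carrier := coordinate_series n E V i\<rparr>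
      Mod coordinate_series n E V (Suc i))) \<longleftrightarrow> i \<in> V \<or> n \<le> i" if "i < ?k" for i
    using coordinate_series_step(3)[OF that subgroup_coordinate_series] that by simp
  then have "{i. i < ?k \<and> infinite (carrier (GGamma n E\<lparr>carrier := coordinate_series n E V i\<rparr>
      Mod coordinate_series n E V (Suc i)))} = {i. i < ?k \<and> (i \<in> V \<or> n \<le> i)}"
    (is "?infinite_factors = _") by blast
  also have "\<dots> = V \<union> {n..<?k}" using V by auto
  finally have infinite_factors: "?infinite_factors = V \<union> {n..<?k}" .
  have "finite V" using V finite_subset by blast
  moreover have "V \<inter> {n..<?k} = {}" using V by auto
  ultimately show ?thesis
    unfolding num_infinite_factors_def infinite_factors by (simp add: card_Un_disjoint)
qed

theorem lemma4p1:
  fixes n :: nat and E :: "nat \<Rightarrow> nat \<Rightarrow> bool"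
    and i0 :: nat and z :: int and t :: "nat \<times> nat \<Rightarrow> int"
  assumes sym: "\<And>i j. E i j \<Longrightarrow> E j i"
    and irrefl: "\<And>i. \<not> E i i"
    and dom: "\<And>i j. E i j \<Longrightarrow> i < n \<and> j < n"
    and i0: "i0 < n"
    and z: "z \<noteq> 0"
    and t: "\<And>p. p \<notin> nonedges n E \<Longrightarrow> t p = 0"
  shows "hirsch (GGamma n E)
           (centralizer (GGamma n E) ((\<lambda>i. if i = i0 then z else 0), t))
         = vertex_degree n E i0 + card (nonedges n E) + 1"
proof -
  let ?V = "insert i0 {j. j < n \<and> E i0 j}"
  have "?V \<subseteq> {0..<n}" using i0 by auto
  then have "hirsch (GGamma n E) (support_subgroup n E ?V) = card ?V + card (nonedges n E)"
    using abelian_coordinates.hirsch_eq_num_infinite_factors[OF GGamma_abelian_coordinates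
        cyclic_subnormal_coordinate_series] num_infinite_factors_coordinate_series
    by simp
  moreover have "card ?V = vertex_degree n E i0 + 1"
    using irrefl by (simp add: vertex_degree_def)
  ultimately show ?thesis using centralizer_vertex_power[OF sym z i0] by simp
qed

end
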